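(* Let $0<\mu_n<\infty$ and $t\in\mathbb R$. Then for each fixed sample size $n$, every estimator $\hat G_n(t)$ of $G_{A,n,\theta}(t)$ satisfies $$\sup_{|\theta|<c\mu_n}P_{n,\theta}\big(|\hat G_n(t)-G_{A,n,\theta}(t)|>\varepsilon\big)\ge\tfrac12$$ for each $\varepsilon<(\Phi(n^{1/2}\mu_n(t+1))-\Phi(n^{1/2}\mu_n(t-1)))/2$ and each $c>|t|$. Consequently, if $\mu_n\to0$ and $n^{1/2}\mu_n\to\infty$, then for each $c>|t|$, $$\liminf_{n\to\infty}\inf_{\hat G_n(t)}\sup_{|\theta|<c\mu_n}P_{n,\theta}\big(|\hat G_n(t)-G_{A,n,\theta}(t)|>\varepsilon\big)\ge\tfrac12$$ for each $\varepsilon<1/2$ if $|t|<1$, and for each $\varepsilon<1/4$ if $|t|=1$, where the infimum is over all estimators $\hat G_n(t)$.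
   Context: Gaussian location model: for each sample size $n$, $y_1,\dots,y_n$ are i.i.d. $N(\theta,1)$ with $\theta\in\mathbb R$ unknown; $\bar y$ is their mean. $P_{n,\theta}$ denotes the probability governing a sample of size $n$ when $\theta$ is the true parameter. Given a nonrandom tuning parameter $\mu_n>0$, the adaptive LASSO estimator is $\hat\theta_A=0$ if $|\bar y|\le\mu_n$ and $\hat\theta_A=\bar y-\mu_n^2/\bar y$ if $|\bar y|>\mu_n$. $G_{A,n,\theta}$ denotes the cdf of $\mu_n^{-1}(\hat\theta_A-\theta)$ under $P_{n,\theta}$. An estimator $\hat G_n(t)$ is any (possibly randomized) measurable function of the data $y_1,\dots,y_n$ (and of an independent randomization). $\Phi$ is the standard normal cdf. *)

theory Defs
  imports "HOL-Probability.Probability"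
begin

definition Phi :: "real \<Rightarrow> real" where
  "Phi x = measure (density lborel std_normal_density) {..x}"

text \<open>Law of a sample y_0,...,y_(n-1) i.i.d. N(theta,1) (data vectors are functions nat => real,
  extensional outside {..<n}).\<close>
definition sample :: "nat \<Rightarrow> real \<Rightarrow> (nat \<Rightarrow> real) measure" where
  "sample n \<theta> = PiM {..<n} (\<lambda>_. density lborel (normal_density \<theta> 1))"

definition ybar :: "nat \<Rightarrow> (nat \<Rightarrow> real) \<Rightarrow> real" where
  "ybar n y = (\<Sum>i<n. y i) / real n"

definition alasso :: "real \<Rightarrow> real \<Rightarrow> real" where
  "alasso \<mu> yb = (if \<bar>yb\<bar> \<le> \<mu> then 0 else yb - \<mu>\<^sup>2 / yb)"

definition G_A :: "nat \<Rightarrow> real \<Rightarrow> real \<Rightarrow> real \<Rightarrow> real" where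
  "G_A n \<mu> \<theta> t = measure (sample n \<theta>)
     {y \<in> space (sample n \<theta>). (alasso \<mu> (ybar n y) - \<theta>) / \<mu> \<le> t}"

text \<open>A (possibly randomized) estimator for sample size n: a measurable real function of the
  data and of an independent randomization with law R.\<close>
definition estimator :: "nat \<Rightarrow> 'r measure \<Rightarrow> ((nat \<Rightarrow> real) \<times> 'r \<Rightarrow> real) \<Rightarrow> bool" where
  "estimator n R Gh \<longleftrightarrow> prob_space R \<and>
     Gh \<in> borel_measurable (PiM {..<n} (\<lambda>_. borel) \<Otimes>\<^sub>M R)"

definition risk :: "nat \<Rightarrow> real \<Rightarrow> real \<Rightarrow> real \<Rightarrow> 'r measure \<Rightarrow> ((nat \<Rightarrow> real) \<times> 'r \<Rightarrow> real)
     \<Rightarrow> real \<Rightarrow> real" where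
  "risk n \<mu> \<theta> t R Gh \<epsilon> = measure (sample n \<theta> \<Otimes>\<^sub>M R)
     {\<omega> \<in> space (sample n \<theta> \<Otimes>\<^sub>M R). \<bar>Gh \<omega> - G_A n \<mu> \<theta> t\<bar> > \<epsilon>}"

definition maxrisk :: "nat \<Rightarrow> real \<Rightarrow> real \<Rightarrow> real \<Rightarrow> 'r measure \<Rightarrow> ((nat \<Rightarrow> real) \<times> 'r \<Rightarrow> real)
     \<Rightarrow> real \<Rightarrow> real" where
  "maxrisk n \<mu> c t R Gh \<epsilon> = (SUP \<theta> \<in> {\<theta>. \<bar>\<theta>\<bar> < c * \<mu>}. risk n \<mu> \<theta> t R Gh \<epsilon>)"

end

theory Submission imports Defs begin

(* The argument is a two-point (Le Cam type) bound at the kink theta0 = -t mu of the map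
   theta |-> G_A(theta) = G_{A,n,theta}(t).  Since the estimator vanishes for |ybar| <= mu,
   G_A(theta0) = Phi(sqrt n mu (t+1)), whereas for theta < theta0 the event
   {(thetahat - theta)/mu <= t} forces ybar <= -mu, so that the left limit of G_A at theta0 is at
   most Phi(sqrt n mu (t-1)): the cdf jumps by more than 2 eps.  Let E be the event that the
   estimator reports at least G_A(theta0) - eps.  Then the risk at theta0 is at least 1 - P_theta0(E)
   and the risk at every theta slightly left of theta0 is at least P_theta(E).  The law of the data
   depends lower semicontinuously on theta (Fatou's lemma applied to the Gaussian densities),
   so the supremum of the risk is at least max(1 - P_theta0(E), P_theta0(E)) >= 1/2. *)

section \<open>The sampling model\<close>

lemma sample_density:
  "sample n \<theta> = density (PiM {..<n} (\<lambda>_. lborel)) (\<lambda>y. \<Prod>i<n. ennreal (normal_density \<theta> 1 (y i)))"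
proof -
  let ?N = "density lborel (normal_density \<theta> 1)"
  let ?D = "density (PiM {..<n} (\<lambda>_. lborel)) (\<lambda>y. \<Prod>i<n. ennreal (normal_density \<theta> 1 (y i)))"
  interpret N: product_prob_space "\<lambda>_. ?N" "{..<n}"
    by (rule product_prob_spaceI, rule prob_space_normal_density, simp)
  interpret L: product_sigma_finite "\<lambda>_::nat. lborel"
    by standard
  have "?D = PiM {..<n} (\<lambda>_. ?N)"
  proof (rule N.PiM_eqI)
    show "sets ?D = sets (PiM {..<n} (\<lambda>_. ?N))"
      unfolding sets_density by (rule sets_PiM_cong) auto
  next
    fix A assume A: "\<And>i. i \<in> {..<n} \<Longrightarrow> A i \<in> sets ?N"
    have "emeasure ?D (PiE {..<n} A)
       = (\<integral>\<^sup>+ y. (\<Prod>i<n. ennreal (normal_density \<theta> 1 (y i))) * indicator (PiE {..<n} A) y \<partial>PiM {..<n} (\<lambda>_. lborel))"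
      using A by (intro emeasure_density) (auto intro!: sets_PiM_I_finite)
    also have "\<dots> = (\<integral>\<^sup>+ y. (\<Prod>i<n. ennreal (normal_density \<theta> 1 (y i)) * indicator (A i) (y i)) \<partial>PiM {..<n} (\<lambda>_. lborel))"
      by (intro nn_integral_cong) (auto simp: space_PiM indicator_def prod.distrib PiE_iff split: if_splits)
    also have "\<dots> = (\<Prod>i<n. \<integral>\<^sup>+ x. ennreal (normal_density \<theta> 1 x) * indicator (A i) x \<partial>lborel)"
      using A by (intro L.product_nn_integral_prod) auto
    also have "\<dots> = (\<Prod>i<n. emeasure ?N (A i))"
      using A by (intro prod.cong refl) (simp add: emeasure_density)
    finally show "emeasure ?D (PiE {..<n} A) = (\<Prod>i<n. emeasure ?N (A i))" .
  qed simp
  then show ?thesis unfolding sample_def by simp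
qed

lemma sample_pair_density:
  assumes R: "prob_space R"
  shows "sample n \<theta> \<Otimes>\<^sub>M R = density (PiM {..<n} (\<lambda>_. lborel) \<Otimes>\<^sub>M R)
            (\<lambda>\<omega>. ennreal (\<Prod>i<n. normal_density \<theta> 1 (fst \<omega> i)))"
proof -
  interpret R: prob_space R by fact
  have "sample n \<theta> \<Otimes>\<^sub>M R = density (PiM {..<n} (\<lambda>_. lborel)) (\<lambda>y. \<Prod>i<n. ennreal (normal_density \<theta> 1 (y i))) \<Otimes>\<^sub>M density R (\<lambda>_. 1)"
    by (simp add: sample_density density_1)
  also have "\<dots> = density (PiM {..<n} (\<lambda>_. lborel) \<Otimes>\<^sub>M R) (\<lambda>(x,y). (\<Prod>i<n. ennreal (normal_density \<theta> 1 (x i))) * 1)"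
    by (rule pair_measure_density) (auto simp: density_1 R.sigma_finite_measure_axioms)
  also have "\<dots> = density (PiM {..<n} (\<lambda>_. lborel) \<Otimes>\<^sub>M R) (\<lambda>\<omega>. ennreal (\<Prod>i<n. normal_density \<theta> 1 (fst \<omega> i)))"
    by (intro density_cong) (auto simp: prod_ennreal)
  finally show ?thesis .
qed

lemma sets_sample_pair: "sets (sample n \<theta> \<Otimes>\<^sub>M R) = sets (PiM {..<n} (\<lambda>_. borel) \<Otimes>\<^sub>M R)"
  unfolding sample_def by (intro sets_pair_measure_cong sets_PiM_cong) auto

lemma space_sample_pair: "space (sample n \<theta> \<Otimes>\<^sub>M R) = space (PiM {..<n} (\<lambda>_. borel) \<Otimes>\<^sub>M R)"
  by (rule sets_eq_imp_space_eq) (rule sets_sample_pair)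

lemma prob_space_sample: "prob_space (sample n \<theta>)"
  unfolding sample_def by (intro prob_space_PiM prob_space_normal_density) simp

lemma prob_space_sample_pair: "prob_space R \<Longrightarrow> prob_space (sample n \<theta> \<Otimes>\<^sub>M R)"
  by (intro prob_space_pair prob_space_sample)

text \<open>Lower semicontinuity of \<open>\<theta> \<mapsto> P\<^sub>\<theta>(E)\<close>: the densities converge pointwise, so
  Fatou's lemma applies.\<close>
lemma emeasure_sample_pair_lsc:
  assumes R: "prob_space R" and E: "E \<in> sets (PiM {..<n} (\<lambda>_. borel) \<Otimes>\<^sub>M R)"
    and lim: "\<theta>k \<longlonglongrightarrow> \<theta>0"
  shows "emeasure (sample n \<theta>0 \<Otimes>\<^sub>M R) E \<le> liminf (\<lambda>k. emeasure (sample n (\<theta>k k) \<Otimes>\<^sub>M R) E)"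
proof -
  let ?L = "PiM {..<n} (\<lambda>_. lborel) \<Otimes>\<^sub>M R"
  let ?u = "\<lambda>\<theta> \<omega>. ennreal ((\<Prod>i<n. normal_density \<theta> 1 (fst \<omega> i)) * indicator E \<omega>)"
  have EL: "E \<in> sets ?L"
    using E by (simp add: sets_pair_measure_cong[OF sets_PiM_cong[OF refl, of _ "\<lambda>_. lborel" "\<lambda>_. borel"]])
  have em: "emeasure (sample n \<theta> \<Otimes>\<^sub>M R) E = integral\<^sup>N ?L (?u \<theta>)" for \<theta>
    unfolding sample_pair_density[OF R]
    by (subst emeasure_density[OF _ EL]) (auto intro!: nn_integral_cong simp: ennreal_mult' indicator_def)
  have pointwise: "liminf (\<lambda>k. ?u (\<theta>k k) \<omega>) = ?u \<theta>0 \<omega>" for \<omega>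
  proof (rule lim_imp_Liminf)
    show "(\<lambda>k. ?u (\<theta>k k) \<omega>) \<longlonglongrightarrow> ?u \<theta>0 \<omega>"
      unfolding normal_density_def by (intro tendsto_ennrealI tendsto_intros lim) auto
  qed simp
  have "emeasure (sample n \<theta>0 \<Otimes>\<^sub>M R) E = (\<integral>\<^sup>+ \<omega>. liminf (\<lambda>k. ?u (\<theta>k k) \<omega>) \<partial>?L)"
    by (simp add: em pointwise)
  also have "\<dots> \<le> liminf (\<lambda>k. integral\<^sup>N ?L (?u (\<theta>k k)))"
    by (rule nn_integral_liminf) (use EL in measurable)
  finally show ?thesis by (simp add: em)
qed

lemma measure_sample_pair_le_from_left:
  assumes R: "prob_space R" and E: "E \<in> sets (PiM {..<n} (\<lambda>_. borel) \<Otimes>\<^sub>M R)"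
    and S: "0 \<le> S" and left: "\<forall>\<^sub>F \<theta> in at_left \<theta>0. measure (sample n \<theta> \<Otimes>\<^sub>M R) E \<le> S"
  shows "measure (sample n \<theta>0 \<Otimes>\<^sub>M R) E \<le> S"
proof -
  define \<theta>k where "\<theta>k = (\<lambda>k::nat. \<theta>0 - 1 / (real k + 1))"
  have \<theta>k_lim: "\<theta>k \<longlonglongrightarrow> \<theta>0"
    unfolding \<theta>k_def by real_asymp
  have "filterlim \<theta>k (at_left \<theta>0) sequentially"
    by (intro tendsto_imp_filterlim_at_left \<theta>k_lim) (simp add: \<theta>k_def)
  from eventually_compose_filterlim[OF left this]
  have "\<forall>\<^sub>F k in sequentially. emeasure (sample n (\<theta>k k) \<Otimes>\<^sub>M R) E \<le> ennreal S"
    by eventually_elim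
      (use prob_space_sample_pair[OF R] in \<open>simp add: prob_space_def finite_measure.emeasure_eq_measure ennreal_leI\<close>)
  then have "limsup (\<lambda>k. emeasure (sample n (\<theta>k k) \<Otimes>\<^sub>M R) E) \<le> ennreal S"
    by (rule Limsup_bounded)
  moreover have "emeasure (sample n \<theta>0 \<Otimes>\<^sub>M R) E \<le> liminf (\<lambda>k. emeasure (sample n (\<theta>k k) \<Otimes>\<^sub>M R) E)"
    by (rule emeasure_sample_pair_lsc[OF R E \<theta>k_lim])
  moreover have "liminf (\<lambda>k. emeasure (sample n (\<theta>k k) \<Otimes>\<^sub>M R) E) \<le> limsup (\<lambda>k. emeasure (sample n (\<theta>k k) \<Otimes>\<^sub>M R) E)"
    by (rule Liminf_le_Limsup) simp
  ultimately have "emeasure (sample n \<theta>0 \<Otimes>\<^sub>M R) E \<le> ennreal S"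
    by order
  then show ?thesis
    using S by (simp add: measure_def enn2real_leI)
qed

section \<open>The sample mean\<close>

lemma sample_coordinate_law:
  assumes "i < n"
  shows "distr (sample n \<theta>) (density lborel (normal_density \<theta> 1)) (\<lambda>y. y i) = density lborel (normal_density \<theta> 1)"
  unfolding sample_def using assms by (intro distr_PiM_component prob_space_normal_density) auto

lemma sample_coordinate_distributed:
  assumes "i < n"
  shows "distributed (sample n \<theta>) lborel (\<lambda>y. y i) (normal_density \<theta> 1)"
  unfolding distributed_def
proof (intro conjI)
  show "distr (sample n \<theta>) lborel (\<lambda>y. y i) = density lborel (\<lambda>x. ennreal (normal_density \<theta> 1 x))"
    using sample_coordinate_law[OF assms] by (metis distr_cong sets_density sets_lborel)
  show "(\<lambda>y. y i) \<in> measurable (sample n \<theta>) lborel"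
    using assms unfolding sample_def by (simp add: measurable_lborel1)
qed simp

lemma sample_coordinates_indep:
  assumes n: "0 < n"
  shows "prob_space.indep_vars (sample n \<theta>) (\<lambda>_. borel) (\<lambda>i y. y i) {..<n}"
proof -
  let ?N = "density lborel (normal_density \<theta> 1)"
  let ?M = "sample n \<theta>"
  interpret M: prob_space ?M by (rule prob_space_sample)
  have coord_measurable: "\<And>i. i \<in> {..<n} \<Longrightarrow> (\<lambda>y. y i) \<in> measurable ?M borel"
    unfolding sample_def by measurable
  have "distr ?M (PiM {..<n} (\<lambda>_. borel)) (\<lambda>x. \<lambda>i\<in>{..<n}. x i) = distr ?M (PiM {..<n} (\<lambda>_. borel)) (\<lambda>x. x)"
    by (intro distr_cong) (auto simp: sample_def space_PiM PiE_def extensional_restrict)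
  also have "\<dots> = ?M"
    by (rule distr_id2) (simp add: sample_def, intro sets_PiM_cong, auto)
  also have "\<dots> = PiM {..<n} (\<lambda>i. distr ?M borel (\<lambda>y. y i))"
  proof -
    have "PiM {..<n} (\<lambda>i. distr ?M borel (\<lambda>y. y i)) = PiM {..<n} (\<lambda>_. ?N)"
    proof (rule PiM_cong)
      fix i assume "i \<in> {..<n}"
      then show "distr ?M borel (\<lambda>y. y i) = ?N"
        using sample_coordinate_law[of i n \<theta>] by (metis distr_cong lessThan_iff sets_density sets_lborel)
    qed simp
    then show ?thesis by (simp add: sample_def)
  qed
  finally show ?thesis
    using M.indep_vars_iff_distr_eq_PiM'[where I="{..<n}" and X="\<lambda>i y. y i" and M'="\<lambda>_. borel"]
      coord_measurable n by auto
qed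

lemma ybar_distributed:
  assumes n: "0 < n"
  shows "distributed (sample n \<theta>) lborel (ybar n) (normal_density \<theta> (1 / sqrt (real n)))"
proof -
  let ?M = "sample n \<theta>"
  interpret M: prob_space ?M by (rule prob_space_sample)
  have "distributed ?M lborel (\<lambda>x. \<Sum>i\<in>{..<n}. x i) (normal_density (\<Sum>i\<in>{..<n}. \<theta>) (sqrt (\<Sum>i\<in>{..<n}. 1\<^sup>2)))"
    using n by (intro M.sum_indep_normal sample_coordinates_indep sample_coordinate_distributed) auto
  then have "distributed ?M lborel (\<lambda>x. \<Sum>i<n. x i) (normal_density (real n * \<theta>) (sqrt (real n)))"
    by simp
  then have "distributed ?M lborel (\<lambda>x. 0 + (1 / real n) * (\<Sum>i<n. x i))
          (normal_density (0 + (1 / real n) * (real n * \<theta>)) (\<bar>1 / real n\<bar> * sqrt (real n)))"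
    using n by (intro M.normal_density_affine) auto
  moreover have "(\<lambda>x. 0 + (1 / real n) * (\<Sum>i<n. x i)) = ybar n"
    by (auto simp: ybar_def fun_eq_iff)
  moreover have "\<bar>1 / real n\<bar> * sqrt (real n) = 1 / sqrt (real n)"
    using n by (simp add: field_simps)
  ultimately show ?thesis using n by simp
qed

lemma ybar_measurable: "0 < n \<Longrightarrow> ybar n \<in> borel_measurable (sample n \<theta>)"
  using ybar_distributed[of n \<theta>] by (simp add: distributed_def)

lemma ybar_cdf:
  assumes n: "0 < n"
  shows "measure (sample n \<theta>) {y \<in> space (sample n \<theta>). ybar n y \<le> x} = Phi (sqrt (real n) * (x - \<theta>))"
proof -
  let ?M = "sample n \<theta>"
  let ?Z = "\<lambda>y. (ybar n y - \<theta>) / (1 / sqrt (real n))"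
  interpret M: prob_space ?M by (rule prob_space_sample)
  have sd_pos: "0 < 1 / sqrt (real n)" using n by simp
  have Z: "distributed ?M lborel ?Z std_normal_density"
    using M.normal_standard_normal_convert[OF sd_pos] ybar_distributed[OF n] by blast
  have "{y \<in> space ?M. ybar n y \<le> x} = ?Z -` {..sqrt (real n) * (x - \<theta>)} \<inter> space ?M"
    using n by (auto simp: field_simps mult.commute)
  then have "measure ?M {y \<in> space ?M. ybar n y \<le> x} = measure (distr ?M lborel ?Z) {..sqrt (real n) * (x - \<theta>)}"
    using Z by (subst measure_distr) (auto simp: distributed_def)
  also have "\<dots> = Phi (sqrt (real n) * (x - \<theta>))"
    using Z by (simp add: distributed_def Phi_def)
  finally show ?thesis .
qed

section \<open>The standard normal cdf\<close>

abbreviation std_normal :: "real measure" where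
  "std_normal \<equiv> density lborel (\<lambda>x. ennreal (std_normal_density x))"

lemma real_distribution_std_normal: "real_distribution std_normal"
  unfolding real_distribution_def real_distribution_axioms_def
  using prob_space_normal_density[of 1 0] by auto

lemma Phi_eq_cdf: "Phi = cdf std_normal"
  by (auto simp: fun_eq_iff Phi_def cdf_def)

text \<open>The standard normal law has no atoms, so \<open>\<Phi>\<close> is continuous.\<close>
lemma std_normal_singleton: "measure std_normal {x} = 0"
proof -
  have "AE y in lborel. y \<in> {x} \<longrightarrow> ennreal (std_normal_density y) = 0"
    by (rule AE_I'[of "{x}"]) (auto simp: null_sets_def)
  then have "{x} \<in> null_sets std_normal"
    by (subst null_sets_density_iff) auto
  then show ?thesis by (simp add: measure_def null_setsD1)
qed

lemma isCont_Phi: "isCont Phi x"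
  unfolding Phi_eq_cdf
  using finite_borel_measure.isCont_cdf[OF real_distribution.finite_borel_measure_M[OF real_distribution_std_normal]]
    std_normal_singleton by blast

lemma Phi_at_top: "(Phi \<longlongrightarrow> 1) at_top"
  unfolding Phi_eq_cdf by (rule real_distribution.cdf_lim_at_top_prob[OF real_distribution_std_normal])

lemma Phi_at_bot: "(Phi \<longlongrightarrow> 0) at_bot"
  unfolding Phi_eq_cdf
  by (rule finite_borel_measure.cdf_lim_at_bot[OF real_distribution.finite_borel_measure_M[OF real_distribution_std_normal]])

text \<open>By symmetry of the standard normal law, \<open>\<Phi>(0) = 1/2\<close>.\<close>
lemma Phi_0: "Phi 0 = 1/2"
proof -
  interpret P: prob_space std_normal using prob_space_normal_density[of 1 0] by auto
  have "distributed std_normal lborel (\<lambda>x. x) std_normal_density"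
    unfolding distributed_def by (auto simp: distr_id2)
  then have "distributed std_normal lborel (\<lambda>x. 0 + (-1) * x) (normal_density (0 + (-1) * 0) (\<bar>-1\<bar> * 1))"
    by (intro P.normal_density_affine) auto
  then have reflection: "distr std_normal lborel uminus = std_normal"
    by (simp add: distributed_def)
  have "measure std_normal {..0} = measure (distr std_normal lborel uminus) {..0}"
    by (simp add: reflection)
  also have "\<dots> = measure std_normal {0..}"
    by (subst measure_distr) (auto intro!: arg_cong[where f="measure std_normal"])
  also have "{0..} = {0<..} \<union> {0::real}" by auto
  also have "measure std_normal \<dots> = measure std_normal {0<..} + measure std_normal {0}"
    by (rule P.finite_measure_Union) auto
  finally have halves_equal: "measure std_normal {..0} = measure std_normal {0<..}"
    using std_normal_singleton by simp
  have "measure std_normal {..0} + measure std_normal {0<..} = measure std_normal ({..0} \<union> {0<..})"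
    by (rule P.finite_measure_Union[symmetric]) auto
  also have "{..0} \<union> {0<..} = (UNIV :: real set)" by auto
  finally have "measure std_normal {..0} + measure std_normal {0<..} = 1"
    using P.prob_space by simp
  then show ?thesis using halves_equal by (simp add: Phi_def)
qed

section \<open>The cdf of the adaptive LASSO at the kink\<close>

lemma alasso_nonpos_iff:
  assumes m: "0 < \<mu>"
  shows "alasso \<mu> x \<le> 0 \<longleftrightarrow> x \<le> \<mu>"
proof (cases "\<bar>x\<bar> \<le> \<mu>")
  case True
  then show ?thesis by (auto simp: alasso_def)
next
  case False
  then consider "\<mu> < x" | "x < -\<mu>" by linarith
  then show ?thesis
  proof cases
    case 1
    then have "\<mu>\<^sup>2 / x < x"
      using m by (simp add: divide_less_eq power2_eq_square mult_strict_mono)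
    then show ?thesis using 1 m by (auto simp: alasso_def)
  next
    case 2
    have "\<mu> * \<mu> < (-x) * (-x)"
      by (rule mult_strict_mono) (use 2 m in auto)
    then have "x \<le> \<mu>\<^sup>2 / x"
      using 2 m by (simp add: le_divide_eq power2_eq_square)
    then show ?thesis using 2 m by (auto simp: alasso_def)
  qed
qed

text \<open>It is strictly negative only when \<open>ybar \<le> -\<mu>\<close>, because it vanishes on \<open>[-\<mu>, \<mu>]\<close>.\<close>
lemma alasso_neg_imp:
  assumes m: "0 < \<mu>" and neg: "alasso \<mu> x < 0"
  shows "x \<le> -\<mu>"
  using neg alasso_nonpos_iff[OF m, of x] by (auto simp: alasso_def split: if_splits)

text \<open>At the kink \<open>\<theta> = -t\<mu>\<close> the event \<open>{(\<theta>\<^sub>A - \<theta>)/\<mu> \<le> t}\<close> is \<open>{ybar \<le> \<mu>}\<close>.\<close>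
lemma G_A_at_kink:
  assumes n: "0 < n" and m: "0 < \<mu>"
  shows "G_A n \<mu> (- t * \<mu>) t = Phi (sqrt (real n) * \<mu> * (t + 1))"
proof -
  have "(alasso \<mu> x - (- t * \<mu>)) / \<mu> \<le> t \<longleftrightarrow> x \<le> \<mu>" for x
    using m alasso_nonpos_iff[OF m, of x] by (simp add: divide_le_eq algebra_simps)
  then have "{y \<in> space (sample n (- t * \<mu>)). (alasso \<mu> (ybar n y) - (- t * \<mu>)) / \<mu> \<le> t}
      = {y \<in> space (sample n (- t * \<mu>)). ybar n y \<le> \<mu>}"
    by auto
  then show ?thesis
    unfolding G_A_def using ybar_cdf[OF n, of "- t * \<mu>" \<mu>] by (simp add: algebra_simps)
qed

text \<open>Left of the kink the event forces \<open>ybar \<le> -\<mu>\<close>, which gives an upper bound for \<open>G\<^sub>A\<close>.\<close>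
lemma G_A_left_of_kink:
  assumes n: "0 < n" and m: "0 < \<mu>" and th: "\<theta> < - t * \<mu>"
  shows "G_A n \<mu> \<theta> t \<le> Phi (sqrt (real n) * (- \<mu> - \<theta>))"
proof -
  interpret M: prob_space "sample n \<theta>" by (rule prob_space_sample)
  have "{y \<in> space (sample n \<theta>). (alasso \<mu> (ybar n y) - \<theta>) / \<mu> \<le> t}
      \<subseteq> {y \<in> space (sample n \<theta>). ybar n y \<le> - \<mu>}"
  proof safe
    fix y assume "(alasso \<mu> (ybar n y) - \<theta>) / \<mu> \<le> t"
    then have "alasso \<mu> (ybar n y) \<le> t * \<mu> + \<theta>"
      using m by (simp add: divide_le_eq algebra_simps)
    then show "ybar n y \<le> - \<mu>"
      using th by (intro alasso_neg_imp[OF m]) simp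
  qed
  moreover have "{y \<in> space (sample n \<theta>). ybar n y \<le> - \<mu>} \<in> M.events"
    using ybar_measurable[OF n, of \<theta>] by measurable
  ultimately have "G_A n \<mu> \<theta> t \<le> M.prob {y \<in> space (sample n \<theta>). ybar n y \<le> - \<mu>}"
    unfolding G_A_def by (rule M.finite_measure_mono)
  then show ?thesis using ybar_cdf[OF n, of \<theta> "-\<mu>"] by simp
qed

text \<open>Consequently the left limit of \<open>\<theta> \<mapsto> G\<^sub>A(\<theta>)\<close> at the kink is at most
  \<open>\<Phi>(\<surd>n \<mu> (t - 1))\<close> (every larger \<open>g\<close> is eventually an upper bound), while its value there
  is \<open>\<Phi>(\<surd>n \<mu> (t + 1))\<close>.\<close>
lemma G_A_left_limit:
  assumes n: "0 < n" and m: "0 < \<mu>" and g: "Phi (sqrt (real n) * \<mu> * (t - 1)) < g"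
  shows "\<forall>\<^sub>F \<theta> in at_left (- t * \<mu>). G_A n \<mu> \<theta> t < g"
proof -
  have kink_value: "sqrt (real n) * (- \<mu> - (- t * \<mu>)) = sqrt (real n) * \<mu> * (t - 1)"
    by (simp add: algebra_simps)
  have "((\<lambda>\<theta>. Phi (sqrt (real n) * (- \<mu> - \<theta>))) \<longlongrightarrow> Phi (sqrt (real n) * (- \<mu> - (- t * \<mu>))))
          (at_left (- t * \<mu>))"
    by (intro isCont_tendsto_compose[OF isCont_Phi] tendsto_intros)
  then have "\<forall>\<^sub>F \<theta> in at_left (- t * \<mu>). Phi (sqrt (real n) * (- \<mu> - \<theta>)) < g"
    unfolding kink_value by (rule order_tendstoD(2)[OF _ g])
  moreover have "\<forall>\<^sub>F \<theta> in at_left (- t * \<mu>). \<theta> < - t * \<mu>"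
    by (simp add: eventually_at_filter)
  ultimately show ?thesis
    by eventually_elim (use G_A_left_of_kink[OF n m] in fastforce)
qed

section \<open>Risk inequalities and the finite-sample bound\<close>

definition reports_at_least :: "nat \<Rightarrow> 'r measure \<Rightarrow> ((nat \<Rightarrow> real) \<times> 'r \<Rightarrow> real) \<Rightarrow> real
     \<Rightarrow> ((nat \<Rightarrow> real) \<times> 'r) set" where
  "reports_at_least n R Gh g = {\<omega> \<in> space (PiM {..<n} (\<lambda>_. borel) \<Otimes>\<^sub>M R). g \<le> Gh \<omega>}"

lemma reports_at_least_sets:
  assumes "estimator n R Gh"
  shows "reports_at_least n R Gh g \<in> sets (PiM {..<n} (\<lambda>_. borel) \<Otimes>\<^sub>M R)"
  using assms unfolding reports_at_least_def estimator_def by (elim conjE) measurable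

lemma risk_event_sets:
  assumes "estimator n R Gh"
  shows "{\<omega> \<in> space (sample n \<theta> \<Otimes>\<^sub>M R). \<epsilon> < \<bar>Gh \<omega> - G_A n \<mu> \<theta> t\<bar>} \<in> sets (sample n \<theta> \<Otimes>\<^sub>M R)"
  using assms unfolding space_sample_pair sets_sample_pair estimator_def by (elim conjE) measurable

lemma maxrisk_ge_risk:
  assumes R: "prob_space R" and \<theta>: "\<bar>\<theta>\<bar> < c * \<mu>"
  shows "risk n \<mu> \<theta> t R Gh \<epsilon> \<le> maxrisk n \<mu> c t R Gh \<epsilon>"
proof -
  have "risk n \<mu> \<theta>' t R Gh \<epsilon> \<le> 1" for \<theta>'
  proof -
    interpret P: prob_space "sample n \<theta>' \<Otimes>\<^sub>M R" by (rule prob_space_sample_pair[OF R])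
    show ?thesis unfolding risk_def by simp
  qed
  then have "bdd_above ((\<lambda>\<theta>. risk n \<mu> \<theta> t R Gh \<epsilon>) ` {\<theta>. \<bar>\<theta>\<bar> < c * \<mu>})"
    by (auto intro!: bdd_aboveI)
  then show ?thesis
    unfolding maxrisk_def using \<theta> by (intro cSUP_upper) auto
qed

lemma risk_ge_prob_reports:
  assumes est: "estimator n R Gh" and below: "G_A n \<mu> \<theta> t < g - \<epsilon>"
  shows "measure (sample n \<theta> \<Otimes>\<^sub>M R) (reports_at_least n R Gh g) \<le> risk n \<mu> \<theta> t R Gh \<epsilon>"
proof -
  interpret P: prob_space "sample n \<theta> \<Otimes>\<^sub>M R"
    using est by (intro prob_space_sample_pair) (simp add: estimator_def)
  have "reports_at_least n R Gh g \<subseteq> {\<omega> \<in> space (sample n \<theta> \<Otimes>\<^sub>M R). \<epsilon> < \<bar>Gh \<omega> - G_A n \<mu> \<theta> t\<bar>}"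
    using below by (auto simp: reports_at_least_def space_sample_pair)
  then show ?thesis
    unfolding risk_def by (intro P.finite_measure_mono risk_event_sets est)
qed

lemma risk_ge_prob_not_reports:
  assumes est: "estimator n R Gh"
  shows "1 - measure (sample n \<theta> \<Otimes>\<^sub>M R) (reports_at_least n R Gh (G_A n \<mu> \<theta> t - \<epsilon>))
           \<le> risk n \<mu> \<theta> t R Gh \<epsilon>"
proof -
  let ?E = "reports_at_least n R Gh (G_A n \<mu> \<theta> t - \<epsilon>)"
  interpret P: prob_space "sample n \<theta> \<Otimes>\<^sub>M R"
    using est by (intro prob_space_sample_pair) (simp add: estimator_def)
  have E: "?E \<in> P.events"
    using reports_at_least_sets[OF est] by (simp add: sets_sample_pair)
  have "space (sample n \<theta> \<Otimes>\<^sub>M R) - ?E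
          \<subseteq> {\<omega> \<in> space (sample n \<theta> \<Otimes>\<^sub>M R). \<epsilon> < \<bar>Gh \<omega> - G_A n \<mu> \<theta> t\<bar>}"
    by (auto simp: reports_at_least_def space_sample_pair)
  then have "P.prob (space (sample n \<theta> \<Otimes>\<^sub>M R) - ?E) \<le> risk n \<mu> \<theta> t R Gh \<epsilon>"
    unfolding risk_def by (intro P.finite_measure_mono risk_event_sets est)
  then show ?thesis using P.prob_compl[OF E] by simp
qed

text \<open>With \<open>E\<close> the event of
  reporting at least \<open>G\<^sub>A(\<theta>\<^sub>0) - \<epsilon>\<close> at the kink \<open>\<theta>\<^sub>0 = -t\<mu>\<close>, the risk at \<open>\<theta>\<^sub>0\<close> is at least
  \<open>1 - P\<^sub>\<theta>\<^sub>0(E)\<close>, the risk just left of \<open>\<theta>\<^sub>0\<close> is at least \<open>P\<^sub>\<theta>(E)\<close>, and by lower semicontinuity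
  the latter is asymptotically at least \<open>P\<^sub>\<theta>\<^sub>0(E)\<close>.\<close>
lemma maxrisk_ge_half:
  assumes n: "0 < n" and m: "0 < \<mu>" and c: "\<bar>t\<bar> < c"
    and eps: "\<epsilon> < (Phi (sqrt (real n) * \<mu> * (t + 1)) - Phi (sqrt (real n) * \<mu> * (t - 1))) / 2"
    and est: "estimator n R Gh"
  shows "maxrisk n \<mu> c t R Gh \<epsilon> \<ge> 1/2"
proof -
  have R: "prob_space R" using est by (simp add: estimator_def)
  define \<theta>0 where "\<theta>0 = - t * \<mu>"
  define G0 where "G0 = G_A n \<mu> \<theta>0 t"
  define E where "E = reports_at_least n R Gh (G0 - \<epsilon>)"
  let ?S = "maxrisk n \<mu> c t R Gh \<epsilon>"
  have \<theta>0_range: "\<bar>\<theta>0\<bar> < c * \<mu>"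
    using c m by (simp add: \<theta>0_def abs_mult)
  have jump: "Phi (sqrt (real n) * \<mu> * (t - 1)) < G0 - 2 * \<epsilon>"
    using eps G_A_at_kink[OF n m] by (simp add: G0_def \<theta>0_def)
  have near_kink: "\<forall>\<^sub>F \<theta> in at_left \<theta>0. \<bar>\<theta>\<bar> < c * \<mu> \<and> G_A n \<mu> \<theta> t < G0 - 2 * \<epsilon>"
  proof (rule eventually_conj)
    show "\<forall>\<^sub>F \<theta> in at_left \<theta>0. \<bar>\<theta>\<bar> < c * \<mu>"
      using \<theta>0_range by (intro order_tendstoD(2)[OF tendsto_rabs[OF tendsto_ident_at]])
    show "\<forall>\<^sub>F \<theta> in at_left \<theta>0. G_A n \<mu> \<theta> t < G0 - 2 * \<epsilon>"
      unfolding \<theta>0_def by (rule G_A_left_limit[OF n m jump])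
  qed
  have risk_\<theta>0: "risk n \<mu> \<theta>0 t R Gh \<epsilon> \<le> ?S"
    by (rule maxrisk_ge_risk[OF R \<theta>0_range])
  then have "0 \<le> ?S"
    unfolding risk_def by (meson measure_nonneg order_trans)
  moreover from near_kink
  have "\<forall>\<^sub>F \<theta> in at_left \<theta>0. measure (sample n \<theta> \<Otimes>\<^sub>M R) E \<le> ?S"
  proof eventually_elim
    case (elim \<theta>)
    have "measure (sample n \<theta> \<Otimes>\<^sub>M R) E \<le> risk n \<mu> \<theta> t R Gh \<epsilon>"
      unfolding E_def using elim by (intro risk_ge_prob_reports est) simp
    also have "\<dots> \<le> ?S"
      using elim by (intro maxrisk_ge_risk R) simp
    finally show ?case .
  qed
  ultimately have prob_E: "measure (sample n \<theta>0 \<Otimes>\<^sub>M R) E \<le> ?S"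
    unfolding E_def by (intro measure_sample_pair_le_from_left R reports_at_least_sets est)
  have "1 - measure (sample n \<theta>0 \<Otimes>\<^sub>M R) E \<le> risk n \<mu> \<theta>0 t R Gh \<epsilon>"
    unfolding E_def G0_def by (rule risk_ge_prob_not_reports[OF est])
  also note risk_\<theta>0
  finally show ?thesis using prob_E by linarith
qed

section \<open>The asymptotic bound\<close>

text \<open>When \<open>\<surd>n \<mu>\<^sub>n \<rightarrow> \<infinity>\<close>, the half jump \<open>(\<Phi>(\<surd>n \<mu>\<^sub>n (t+1)) - \<Phi>(\<surd>n \<mu>\<^sub>n (t-1)))/2\<close> tends to
  \<open>1/2\<close> if \<open>|t| < 1\<close> and to \<open>1/4\<close> if \<open>|t| = 1\<close>; so it eventually exceeds \<open>\<epsilon>\<close>.\<close>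
lemma half_jump_eventually_gt:
  fixes a :: "nat \<Rightarrow> real"
  assumes a: "filterlim a at_top sequentially"
    and t: "(\<bar>t\<bar> < 1 \<and> \<epsilon> < 1/2) \<or> (\<bar>t\<bar> = 1 \<and> \<epsilon> < 1/4)"
  shows "\<forall>\<^sub>F n in sequentially. \<epsilon> < (Phi (a n * (t + 1)) - Phi (a n * (t - 1))) / 2"
proof -
  have to_one: "((\<lambda>n. Phi (a n * k)) \<longlongrightarrow> 1) sequentially" if "0 < k" for k
  proof -
    have "filterlim (\<lambda>n. a n * k) at_top sequentially"
      using filterlim_tendsto_pos_mult_at_top[OF tendsto_const that a] by (simp add: mult.commute)
    then show ?thesis by (rule filterlim_compose[OF Phi_at_top])
  qed
  have to_zero: "((\<lambda>n. Phi (a n * k)) \<longlongrightarrow> 0) sequentially" if "k < 0" for k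
  proof -
    have "filterlim (\<lambda>n. a n * k) at_bot sequentially"
      using filterlim_tendsto_neg_mult_at_bot[OF tendsto_const that a] by (simp add: mult.commute)
    then show ?thesis by (rule filterlim_compose[OF Phi_at_bot])
  qed
  from t consider "\<bar>t\<bar> < 1" "\<epsilon> < 1/2" | "t = 1" "\<epsilon> < 1/4" | "t = -1" "\<epsilon> < 1/4"
    by linarith
  then show ?thesis
  proof cases
    case 1
    have "((\<lambda>n. (Phi (a n * (t + 1)) - Phi (a n * (t - 1))) / 2) \<longlongrightarrow> (1 - 0) / 2) sequentially"
      using 1 by (intro tendsto_intros to_one to_zero) auto
    then show ?thesis using 1 by (intro order_tendstoD) auto
  next
    case 2
    have "((\<lambda>n. (Phi (a n * (t + 1)) - Phi (a n * (t - 1))) / 2) \<longlongrightarrow> (1 - 1/2) / 2) sequentially"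
      using 2 by (intro tendsto_intros to_one) (auto simp: Phi_0)
    then show ?thesis using 2 by (intro order_tendstoD) auto
  next
    case 3
    have "((\<lambda>n. (Phi (a n * (t + 1)) - Phi (a n * (t - 1))) / 2) \<longlongrightarrow> (1/2 - 0) / 2) sequentially"
      using 3 by (intro tendsto_intros to_zero) (auto simp: Phi_0)
    then show ?thesis using 3 by (intro order_tendstoD) auto
  qed
qed

text \<open>Estimators exist for every sample size (e.g. a constant), so the infimum below is over a
  nonempty set.\<close>
lemma estimator_exists: "\<exists>p :: 'r measure \<times> ((nat \<Rightarrow> real) \<times> 'r \<Rightarrow> real). estimator n (fst p) (snd p)"
proof -
  have "estimator n (return (count_space UNIV) (undefined::'r)) (\<lambda>_. 0)"
    unfolding estimator_def by (auto intro!: prob_space_return)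
  then show ?thesis by (intro exI[of _ "(return (count_space UNIV) (undefined::'r), \<lambda>_. 0)"]) simp
qed

lemma minimax_risk_ge_half:
  assumes "0 < n" "0 < \<mu>" "\<bar>t\<bar> < c"
    and "\<epsilon> < (Phi (sqrt (real n) * \<mu> * (t + 1)) - Phi (sqrt (real n) * \<mu> * (t - 1))) / 2"
  shows "1/2 \<le> (INF p \<in> {p :: 'r measure \<times> ((nat \<Rightarrow> real) \<times> 'r \<Rightarrow> real). estimator n (fst p) (snd p)}.
                  maxrisk n \<mu> c t (fst p) (snd p) \<epsilon>)"
  using estimator_exists[of n] assms by (intro cINF_greatest maxrisk_ge_half) auto

theorem theorem7:
  fixes t :: real
  shows "(\<forall>(n::nat) (\<mu>::real) (c::real) (\<epsilon>::real) (R::'r measure) Gh.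
            0 < n \<longrightarrow> 0 < \<mu> \<longrightarrow> \<bar>t\<bar> < c \<longrightarrow>
            \<epsilon> < (Phi (sqrt (real n) * \<mu> * (t + 1)) - Phi (sqrt (real n) * \<mu> * (t - 1))) / 2 \<longrightarrow>
            estimator n R Gh \<longrightarrow>
            maxrisk n \<mu> c t R Gh \<epsilon> \<ge> 1/2)
       \<and> (\<forall>(\<mu>::nat \<Rightarrow> real). (\<forall>n. 0 < \<mu> n) \<longrightarrow> \<mu> \<longlonglongrightarrow> 0 \<longrightarrow>
            filterlim (\<lambda>n. sqrt (real n) * \<mu> n) at_top sequentially \<longrightarrow>
            (\<forall>c \<epsilon>. \<bar>t\<bar> < c \<longrightarrow>
               ((\<bar>t\<bar> < 1 \<and> \<epsilon> < 1/2) \<or> (\<bar>t\<bar> = 1 \<and> \<epsilon> < 1/4)) \<longrightarrow>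
               liminf (\<lambda>n. ereal (INF p \<in> {p :: 'r measure \<times> ((nat \<Rightarrow> real) \<times> 'r \<Rightarrow> real).
                                          estimator n (fst p) (snd p)}.
                                  maxrisk n (\<mu> n) c t (fst p) (snd p) \<epsilon>)) \<ge> ereal (1/2)))"
proof (intro conjI allI impI)
  fix n :: nat and \<mu> c \<epsilon> :: real and R :: "'r measure" and Gh
  assume "0 < n" "0 < \<mu>" "\<bar>t\<bar> < c"
    "\<epsilon> < (Phi (sqrt (real n) * \<mu> * (t + 1)) - Phi (sqrt (real n) * \<mu> * (t - 1))) / 2"
    "estimator n R Gh"
  then show "maxrisk n \<mu> c t R Gh \<epsilon> \<ge> 1/2" by (rule maxrisk_ge_half)
next
  fix \<mu> :: "nat \<Rightarrow> real" and c \<epsilon> :: real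
  assume pos: "\<forall>n. 0 < \<mu> n" and "\<mu> \<longlonglongrightarrow> 0"
    and a: "filterlim (\<lambda>n. sqrt (real n) * \<mu> n) at_top sequentially"
    and c: "\<bar>t\<bar> < c" and t: "(\<bar>t\<bar> < 1 \<and> \<epsilon> < 1/2) \<or> (\<bar>t\<bar> = 1 \<and> \<epsilon> < 1/4)"
  from half_jump_eventually_gt[OF a t] eventually_gt_at_top[of 0]
  have "\<forall>\<^sub>F n in sequentially. ereal (1/2) \<le> ereal (INF p \<in> {p :: 'r measure \<times> ((nat \<Rightarrow> real) \<times> 'r \<Rightarrow> real).
            estimator n (fst p) (snd p)}. maxrisk n (\<mu> n) c t (fst p) (snd p) \<epsilon>)"
  proof eventually_elim
    case (elim n)
    then show ?case
      using minimax_risk_ge_half[of n "\<mu> n" t c \<epsilon>] pos c by simp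
  qed
  then show "liminf (\<lambda>n. ereal (INF p \<in> {p :: 'r measure \<times> ((nat \<Rightarrow> real) \<times> 'r \<Rightarrow> real).
            estimator n (fst p) (snd p)}. maxrisk n (\<mu> n) c t (fst p) (snd p) \<epsilon>)) \<ge> ereal (1/2)"
    by (rule Liminf_bounded)
qed

end
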